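(* Let $\mathcal M$ be a left $\mathcal A$-module and $N$ an $R$-submodule of $\mathcal M$. Then for every choice of $\vartheta$, \[ I_N = N\cap\sigma_\vartheta(N)=N\cap\tau_\vartheta(N). \] In particular, $N\cap\sigma_\vartheta(N)$ and $N\cap\tau_\vartheta(N)$ are $\mathcal A$-submodules of $\mathcal M$.
   Context: $R$ is a unital commutative ring and $\mathcal A$ an associative unital (not necessarily commutative) $R$-algebra. The symbol $\vartheta$ ranges over the four options "left", "right", "pre-two-sided", "two-sided". An $R$-submodule $J\subseteq\mathcal A$ is a left (resp. right; two-sided) Mathieu subspace of $\mathcal A$ if whenever $a\in\mathcal A$ satisfies $a^m\in J$ for all $m\ge1$, then for all $b,c\in\mathcal A$ there is $N_0\ge1$ with $ba^m\in J$ (resp. $a^mc\in J$; $ba^mc\in J$) for all $m\ge N_0$; it is a pre-two-sided Mathieu subspace if it is both a left and a right Mathieu subspace. A $\vartheta$-ideal means a left (resp. right; two-sided) ideal for $\vartheta$ = left (resp. right; two-sided), and a two-sided ideal for $\vartheta$ = pre-two-sided. All modules are left modules. For a left $\mathcal A$-module $\mathcal M$, $u\in\mathcal M$ and a subset $N\subseteq\mathcal M$, put $(N:u)=\{a\in\mathcal A: au\in N\}$. For an $R$-submodule $N$ of $\mathcal M$, $\sigma_\vartheta(N)$ is the set of $u\in\mathcal M$ such that $(N:u)$ is a $\vartheta$-ideal of $\mathcal A$, and $\tau_\vartheta(N)$ is the set of $u\in\mathcal M$ such that $(N:u)$ is a $\vartheta$-Mathieu subspace of $\mathcal A$. $I_N$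 denotes the largest $\mathcal A$-submodule of $\mathcal M$ contained in $N$ (the sum of all $\mathcal A$-submodules of $\mathcal M$ contained in $N$). *)

theory Defs
  imports Main
begin

text \<open>Setting: R is a commutative ring (type 'r), the R-algebra A is the ring type 'a
  with scalar multiplication sm, and M is an abelian group (type 'm) with a left
  A-action act. R acts on M through the structure map r \<mapsto> sm r 1.\<close>

definition r_algebra :: "('r::comm_ring_1 \<Rightarrow> 'a::ring_1 \<Rightarrow> 'a) \<Rightarrow> bool" where
  "r_algebra sm \<longleftrightarrow>
     (\<forall>r s a. sm (r + s) a = sm r a + sm s a) \<and>
     (\<forall>r a b. sm r (a + b) = sm r a + sm r b) \<and>
     (\<forall>r s a. sm (r * s) a = sm r (sm s a)) \<and>
     (\<forall>a. sm 1 a = a) \<and>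
     (\<forall>r a b. sm r (a * b) = sm r a * b) \<and>
     (\<forall>r a b. sm r (a * b) = a * sm r b)"

definition left_module :: "('a::ring_1 \<Rightarrow> 'm::ab_group_add \<Rightarrow> 'm) \<Rightarrow> bool" where
  "left_module act \<longleftrightarrow>
     (\<forall>a b u. act (a + b) u = act a u + act b u) \<and>
     (\<forall>a u v. act a (u + v) = act a u + act a v) \<and>
     (\<forall>a b u. act (a * b) u = act a (act b u)) \<and>
     (\<forall>u. act 1 u = u)"

definition r_submodule_alg :: "('r::comm_ring_1 \<Rightarrow> 'a::ring_1 \<Rightarrow> 'a) \<Rightarrow> 'a set \<Rightarrow> bool" where
  "r_submodule_alg sm J \<longleftrightarrow> 0 \<in> J \<and> (\<forall>a\<in>J. \<forall>b\<in>J. a + b \<in> J) \<and> (\<forall>r. \<forall>a\<in>J. sm r a \<in> J)"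

definition r_submodule_mod ::
  "('r::comm_ring_1 \<Rightarrow> 'a::ring_1 \<Rightarrow> 'a) \<Rightarrow> ('a \<Rightarrow> 'm::ab_group_add \<Rightarrow> 'm) \<Rightarrow> 'm set \<Rightarrow> bool" where
  "r_submodule_mod sm act N \<longleftrightarrow> 0 \<in> N \<and> (\<forall>u\<in>N. \<forall>v\<in>N. u + v \<in> N) \<and>
     (\<forall>r. \<forall>u\<in>N. act (sm r 1) u \<in> N)"

definition a_submodule :: "('a::ring_1 \<Rightarrow> 'm::ab_group_add \<Rightarrow> 'm) \<Rightarrow> 'm set \<Rightarrow> bool" where
  "a_submodule act P \<longleftrightarrow> 0 \<in> P \<and> (\<forall>u\<in>P. \<forall>v\<in>P. u + v \<in> P) \<and> (\<forall>a. \<forall>u\<in>P. act a u \<in> P)"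

text \<open>I_N: the sum of all A-submodules contained in N (= the A-submodule generated by their union).\<close>
definition I_sub :: "('a::ring_1 \<Rightarrow> 'm::ab_group_add \<Rightarrow> 'm) \<Rightarrow> 'm set \<Rightarrow> 'm set" where
  "I_sub act N = \<Inter>{P. a_submodule act P \<and> \<Union>{Q. a_submodule act Q \<and> Q \<subseteq> N} \<subseteq> P}"

datatype theta = Left | Right | PreTwoSided | TwoSided

definition left_ideal where
  "left_ideal sm J \<longleftrightarrow> r_submodule_alg sm J \<and> (\<forall>b. \<forall>a\<in>J. b * a \<in> J)"
definition right_ideal where
  "right_ideal sm J \<longleftrightarrow> r_submodule_alg sm J \<and> (\<forall>c. \<forall>a\<in>J. a * c \<in> J)"
definition two_sided_ideal where
  "two_sided_ideal sm J \<longleftrightarrow> left_ideal sm J \<and> right_ideal sm J"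

definition theta_ideal :: "('r::comm_ring_1 \<Rightarrow> 'a::ring_1 \<Rightarrow> 'a) \<Rightarrow> theta \<Rightarrow> 'a set \<Rightarrow> bool" where
  "theta_ideal sm th J = (case th of Left \<Rightarrow> left_ideal sm J | Right \<Rightarrow> right_ideal sm J
     | PreTwoSided \<Rightarrow> two_sided_ideal sm J | TwoSided \<Rightarrow> two_sided_ideal sm J)"

definition left_MS where
  "left_MS sm J \<longleftrightarrow> r_submodule_alg sm J \<and>
     (\<forall>a. (\<forall>m\<ge>1. a ^ m \<in> J) \<longrightarrow> (\<forall>b. \<exists>N0\<ge>1. \<forall>m\<ge>N0. b * a ^ m \<in> J))"
definition right_MS where
  "right_MS sm J \<longleftrightarrow> r_submodule_alg sm J \<and>
     (\<forall>a. (\<forall>m\<ge>1. a ^ m \<in> J) \<longrightarrow> (\<forall>c. \<exists>N0\<ge>1. \<forall>m\<ge>N0. a ^ m * c \<in> J))"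
definition two_sided_MS where
  "two_sided_MS sm J \<longleftrightarrow> r_submodule_alg sm J \<and>
     (\<forall>a. (\<forall>m\<ge>1. a ^ m \<in> J) \<longrightarrow> (\<forall>b c. \<exists>N0\<ge>1. \<forall>m\<ge>N0. b * a ^ m * c \<in> J))"

definition theta_MS :: "('r::comm_ring_1 \<Rightarrow> 'a::ring_1 \<Rightarrow> 'a) \<Rightarrow> theta \<Rightarrow> 'a set \<Rightarrow> bool" where
  "theta_MS sm th J = (case th of Left \<Rightarrow> left_MS sm J | Right \<Rightarrow> right_MS sm J
     | PreTwoSided \<Rightarrow> left_MS sm J \<and> right_MS sm J | TwoSided \<Rightarrow> two_sided_MS sm J)"

definition colon :: "('a \<Rightarrow> 'm \<Rightarrow> 'm) \<Rightarrow> 'm set \<Rightarrow> 'm \<Rightarrow> 'a set" where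
  "colon act N u = {a. act a u \<in> N}"

definition sigma_th ::
  "('r::comm_ring_1 \<Rightarrow> 'a::ring_1 \<Rightarrow> 'a) \<Rightarrow> ('a \<Rightarrow> 'm \<Rightarrow> 'm) \<Rightarrow> theta \<Rightarrow> 'm set \<Rightarrow> 'm set" where
  "sigma_th sm act th N = {u. theta_ideal sm th (colon act N u)}"

definition tau_th ::
  "('r::comm_ring_1 \<Rightarrow> 'a::ring_1 \<Rightarrow> 'a) \<Rightarrow> ('a \<Rightarrow> 'm \<Rightarrow> 'm) \<Rightarrow> theta \<Rightarrow> 'm set \<Rightarrow> 'm set" where
  "tau_th sm act th N = {u. theta_MS sm th (colon act N u)}"

end

theory Submission
  imports Defs
begin

text \<open>
  For \<open>u \<in> N\<close> the colon set \<open>(N:u)\<close> contains \<open>1\<close>, since \<open>1\<cdot>u = u\<close>.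
  An R-submodule of A that contains \<open>1\<close> and is a left, right or two-sided ideal
  is all of A; the same holds for a left, right or two-sided Mathieu subspace,
  because applying the Mathieu condition to \<open>a = 1\<close> (all of whose powers lie in
  the subspace) yields \<open>b = b\<cdot>1\<^sup>m\<close> (resp. \<open>1\<^sup>m\<cdot>c\<close>, \<open>b\<cdot>1\<^sup>m\<cdot>1\<close>) in it.
  Hence both \<open>N \<inter> \<sigma>\<^sub>\<vartheta>(N)\<close> and \<open>N \<inter> \<tau>\<^sub>\<vartheta>(N)\<close> equal the stable part
  \<open>{u \<in> N. \<forall>a. a\<cdot>u \<in> N}\<close> of \<open>N\<close>.  The stable part is an A-submodule of M
  containing every A-submodule inside \<open>N\<close>, so it is the largest one, i.e. \<open>I\<^sub>N\<close>.
\<close>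

definition stable_part :: "('a \<Rightarrow> 'm \<Rightarrow> 'm) \<Rightarrow> 'm set \<Rightarrow> 'm set" where
  "stable_part act N = {u \<in> N. \<forall>a. act a u \<in> N}"

lemma left_module_act_zero:
  assumes "left_module act"
  shows "act a (0::'m::ab_group_add) = 0"
proof -
  have "act a (0 + 0) = act a 0 + act a 0"
    using assms unfolding left_module_def by blast
  then show ?thesis by simp
qed

text \<open>The stable part of an additive subgroup is an A-submodule.\<close>
lemma stable_part_a_submodule:
  assumes module: "left_module act"
    and zero: "0 \<in> N" and add: "\<forall>u\<in>N. \<forall>v\<in>N. u + v \<in> N"
  shows "a_submodule act (stable_part act N)"
  unfolding a_submodule_def
proof (intro conjI ballI allI)
  show "0 \<in> stable_part act N"
    using zero left_module_act_zero[OF module] by (simp add: stable_part_def)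
next
  fix u v assume "u \<in> stable_part act N" "v \<in> stable_part act N"
  then have "u \<in> N" "v \<in> N" "\<forall>a. act a u \<in> N" "\<forall>a. act a v \<in> N"
    by (auto simp: stable_part_def)
  moreover have "\<forall>a. act a (u + v) = act a u + act a v"
    using module unfolding left_module_def by blast
  ultimately show "u + v \<in> stable_part act N"
    using add by (simp add: stable_part_def)
next
  fix a u assume "u \<in> stable_part act N"
  then have "\<forall>b. act b u \<in> N" by (simp add: stable_part_def)
  moreover have "\<forall>b. act b (act a u) = act (b * a) u"
    using module unfolding left_module_def by metis
  ultimately show "act a u \<in> stable_part act N"
    by (simp add: stable_part_def)
qed

lemma a_submodule_subset_stable_part:
  assumes "a_submodule act Q" "Q \<subseteq> N"
  shows "Q \<subseteq> stable_part act N"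
  using assms unfolding a_submodule_def stable_part_def by blast

lemma I_sub_eq_stable_part:
  assumes "left_module act" "0 \<in> N" "\<forall>u\<in>N. \<forall>v\<in>N. u + v \<in> N"
  shows "I_sub act N = stable_part act N"
proof -
  have sub: "a_submodule act (stable_part act N)"
    using stable_part_a_submodule[OF assms] .
  have "\<Union>{Q. a_submodule act Q \<and> Q \<subseteq> N} = stable_part act N"
  proof
    show "\<Union>{Q. a_submodule act Q \<and> Q \<subseteq> N} \<subseteq> stable_part act N"
      using a_submodule_subset_stable_part by blast
    show "stable_part act N \<subseteq> \<Union>{Q. a_submodule act Q \<and> Q \<subseteq> N}"
      using sub by (auto simp: stable_part_def)
  qed
  then show ?thesis
    using sub unfolding I_sub_def by blast
qed

lemma stable_part_iff_colon_UNIV: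
  assumes "u \<in> N"
  shows "u \<in> stable_part act N \<longleftrightarrow> colon act N u = UNIV"
  using assms by (auto simp: stable_part_def colon_def)

lemma one_in_colon:
  assumes "left_module act" "u \<in> N"
  shows "1 \<in> colon act N u"
  using assms unfolding colon_def left_module_def by simp

lemma theta_ideal_UNIV: "theta_ideal sm th UNIV"
  unfolding theta_ideal_def left_ideal_def right_ideal_def two_sided_ideal_def
    r_submodule_alg_def
  by (cases th) auto

lemma theta_MS_UNIV: "theta_MS sm th UNIV"
  unfolding theta_MS_def left_MS_def right_MS_def two_sided_MS_def r_submodule_alg_def
  by (cases th) auto

lemma theta_ideal_one_imp_UNIV:
  assumes "theta_ideal sm th J" "1 \<in> J"
  shows "J = UNIV"
proof -
  have "(\<forall>b. \<forall>a\<in>J. b * a \<in> J) \<or> (\<forall>c. \<forall>a\<in>J. a * c \<in> J)"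
    using assms(1)
    unfolding theta_ideal_def left_ideal_def right_ideal_def two_sided_ideal_def
    by (cases th) auto
  then show ?thesis
    using assms(2) by (metis UNIV_eq_I mult_1_left mult_1_right)
qed

text \<open>All powers of \<open>1\<close> lie in \<open>J\<close>, so the Mathieu condition applies to \<open>a = 1\<close>;
  taking \<open>m\<close> large then puts every element into \<open>J\<close>.\<close>
lemma left_MS_one_imp_UNIV:
  fixes J :: "'a::ring_1 set"
  assumes "left_MS sm J" "1 \<in> J"
  shows "J = UNIV"
proof (rule UNIV_eq_I[symmetric])
  fix b
  have "\<forall>m\<ge>1. (1::'a) ^ m \<in> J"
    using assms(2) by simp
  then obtain N0 where "\<forall>m\<ge>N0. b * 1 ^ m \<in> J"
    using assms(1) unfolding left_MS_def by blast
  then show "b \<in> J" by auto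
qed

lemma right_MS_one_imp_UNIV:
  fixes J :: "'a::ring_1 set"
  assumes "right_MS sm J" "1 \<in> J"
  shows "J = UNIV"
proof (rule UNIV_eq_I[symmetric])
  fix c
  have "\<forall>m\<ge>1. (1::'a) ^ m \<in> J"
    using assms(2) by simp
  then obtain N0 where "\<forall>m\<ge>N0. 1 ^ m * c \<in> J"
    using assms(1) unfolding right_MS_def by blast
  then show "c \<in> J" by auto
qed

lemma two_sided_MS_one_imp_UNIV:
  fixes J :: "'a::ring_1 set"
  assumes "two_sided_MS sm J" "1 \<in> J"
  shows "J = UNIV"
proof (rule UNIV_eq_I[symmetric])
  fix b
  have "\<forall>m\<ge>1. (1::'a) ^ m \<in> J"
    using assms(2) by simp
  then obtain N0 where "\<forall>m\<ge>N0. b * 1 ^ m * 1 \<in> J"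
    using assms(1) unfolding two_sided_MS_def by blast
  then show "b \<in> J" by auto
qed

lemma theta_MS_one_imp_UNIV:
  assumes "theta_MS sm th J" "1 \<in> J"
  shows "J = UNIV"
proof (cases th)
  case Left
  then have "left_MS sm J" using assms(1) by (simp add: theta_MS_def)
  then show ?thesis using assms(2) by (rule left_MS_one_imp_UNIV)
next
  case Right
  then have "right_MS sm J" using assms(1) by (simp add: theta_MS_def)
  then show ?thesis using assms(2) by (rule right_MS_one_imp_UNIV)
next
  case PreTwoSided
  then have "left_MS sm J" using assms(1) by (simp add: theta_MS_def)
  then show ?thesis using assms(2) by (rule left_MS_one_imp_UNIV)
next
  case TwoSided
  then have "two_sided_MS sm J" using assms(1) by (simp add: theta_MS_def)
  then show ?thesis using assms(2) by (rule two_sided_MS_one_imp_UNIV)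
qed

lemma inter_sigma_eq_stable_part:
  assumes "left_module act"
  shows "N \<inter> sigma_th sm act th N = stable_part act N"
proof -
  have "u \<in> sigma_th sm act th N \<longleftrightarrow> u \<in> stable_part act N" if "u \<in> N" for u
    using theta_ideal_one_imp_UNIV[OF _ one_in_colon[OF assms that], of sm th]
      theta_ideal_UNIV[of sm th]
      stable_part_iff_colon_UNIV[OF that, of act]
    unfolding sigma_th_def by auto
  then show ?thesis
    by (auto simp: stable_part_def)
qed

lemma inter_tau_eq_stable_part:
  assumes "left_module act"
  shows "N \<inter> tau_th sm act th N = stable_part act N"
proof -
  have "u \<in> tau_th sm act th N \<longleftrightarrow> u \<in> stable_part act N" if "u \<in> N" for u
    using theta_MS_one_imp_UNIV[OF _ one_in_colon[OF assms that], of sm th]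
      theta_MS_UNIV[of sm th]
      stable_part_iff_colon_UNIV[OF that, of act]
    unfolding tau_th_def by auto
  then show ?thesis
    by (auto simp: stable_part_def)
qed

theorem theorem3p11:
  fixes sm :: "'r::comm_ring_1 \<Rightarrow> 'a::ring_1 \<Rightarrow> 'a"
    and act :: "'a \<Rightarrow> 'm::ab_group_add \<Rightarrow> 'm"
    and N :: "'m set" and th :: theta
  assumes "r_algebra sm" and "left_module act" and "r_submodule_mod sm act N"
  shows "I_sub act N = N \<inter> sigma_th sm act th N \<and> I_sub act N = N \<inter> tau_th sm act th N
    \<and> a_submodule act (N \<inter> sigma_th sm act th N) \<and> a_submodule act (N \<inter> tau_th sm act th N)"
proof -
  have zero: "0 \<in> N" and add: "\<forall>u\<in>N. \<forall>v\<in>N. u + v \<in> N"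
    using assms(3) unfolding r_submodule_mod_def by blast+
  have "I_sub act N = stable_part act N"
    using I_sub_eq_stable_part[OF assms(2) zero add] .
  moreover have "a_submodule act (stable_part act N)"
    using stable_part_a_submodule[OF assms(2) zero add] .
  ultimately show ?thesis
    using inter_sigma_eq_stable_part[OF assms(2), of N sm th]
      inter_tau_eq_stable_part[OF assms(2), of N sm th]
    by simp
qed

end
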